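(* Let $A$ be a simple marked arrangement of $n$ pseudolines, drawn as a wiring diagram, and let $m,k,u,m',k',u'$ be nonnegative integers with $k \leq m$ and $k \leq n-u$. Then \[|\Gamma(m,k,u,m',k',u')| \leq \binom{n-u}{k}\left(\frac{m}{n-u}\right)^k 2^{n-k-u}.\] Symmetrically, if $k' \leq m'$ and $k' \leq n-u'$, then \[|\Gamma(m,k,u,m',k',u')| \leq \binom{n-u'}{k'}\left(\frac{m'}{n-u'}\right)^{k'} 2^{n-k'-u'}.\]
   Context: An arrangement of pseudolines is a finite set of simple curves in the plane, each extending to infinity in both directions, every two intersecting in exactly one point where they cross; simple means no three share a point; marked means an unbounded cell is distinguished as the north-cell, and the south-cell is the cell on the opposite side of every pseudoline. The arrangement is drawn as a wiring diagram: the pseudolines lie on $n$ horizontal wires except near crossings, where two pseudolines on neighboring wires swap wires; the north-cell is the cell above all wires and the south-cell the cell below all wires. A cutpath is a directed path from the north-cell to the south-cell in the dual graph (vertices are cells, edges correspond to shared pseudoline edges, oriented from north side to south side); equivalently, a cutpath moves from cell to cell, each time leaving the current cell by crossing one of the pseudolines bounding it from below. For a cell $c$, let $d$ be the number of edges bounding it from below ("exits"), labelled $1,\dots,d$ from left to right. If $d=1$ the single exit is the unique exit of $c$; if $d\geq 2$, exit $1$ is the left exit, exit $d$ the right exit, and exits $2,\dots,d-1$ are middle exits. The reversed view of a cutpath is obtained by rotating the plane by $180$ degrees (so the south-cell becomes the top cell) and reading the cutpath from the south-cell to the north-cell, with exits defined in the same way in the rotated picture. $\Gamma(m,k,u,m',k',u')$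 is the set of cutpaths of $A$ such that, viewed from the north-cell to the south-cell, the number of middle exits taken is $k$, the number of unique exits taken is $u$, and the total number of middle exits of all visited cells (taken or not) is $m$; and in the reversed view the corresponding numbers are $k'$, $u'$, $m'$. *)

theory Defs
  imports Main Complex_Main
begin

text \<open>
Wiring diagram of n pseudolines: wire positions 1..n numbered from top to bottom.
A word w lists the crossings from left to right; entry p (1 <= p < n) at index t means
that at time t the pseudolines on wire positions p and p+1 swap.
lines_at w t maps a wire position to the pseudoline lying on it before crossing t.
\<close>

definition lines_at :: "nat list \<Rightarrow> nat \<Rightarrow> nat \<Rightarrow> nat" where
  "lines_at w t = foldl (\<lambda>\<sigma> p. \<sigma>(p := \<sigma> (Suc p), Suc p := \<sigma> p)) id (take t w)"

text \<open>Every two pseudolines cross exactly once (simple: one crossing per time step).\<close>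
definition wiring_diagram :: "nat \<Rightarrow> nat list \<Rightarrow> bool" where
  "wiring_diagram n w \<longleftrightarrow> set w \<subseteq> {1..<n} \<and>
     (\<forall>a b. 1 \<le> a \<and> a < b \<and> b \<le> n \<longrightarrow>
        card {t. t < length w \<and>
                 {lines_at w t (w ! t), lines_at w t (Suc (w ! t))} = {a, b}} = 1)"

text \<open>
Slots s = 0..length w are the vertical gaps between consecutive crossings (slot s lies
between crossing s-1 and crossing s).  Level j (0..n) is the region between wire positions
j and j+1 (level 0: above all wires, level n: below all wires).  A cell is a pair
(level, set of slots it spans); level-j cells are separated by crossings at position j.
\<close>

definition cell_slots :: "nat list \<Rightarrow> nat \<Rightarrow> nat \<Rightarrow> nat set" where
  "cell_slots w j s = {s'. s' \<le> length w \<and>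
      (\<forall>t. min s s' \<le> t \<and> t < max s s' \<longrightarrow> w ! t \<noteq> j)}"

definition cellc :: "nat list \<Rightarrow> nat \<Rightarrow> nat \<Rightarrow> nat \<times> nat set" where
  "cellc w j s = (j, cell_slots w j s)"

definition north_cell :: "nat list \<Rightarrow> nat \<times> nat set" where
  "north_cell w = cellc w 0 0"

definition south_cell :: "nat \<Rightarrow> nat list \<Rightarrow> nat \<times> nat set" where
  "south_cell n w = cellc w n 0"

text \<open>Exits of a cell: the cells just below it sharing an edge of its lower boundary
(one per edge bounding it from below).\<close>
definition exits :: "nat \<Rightarrow> nat list \<Rightarrow> nat \<times> nat set \<Rightarrow> (nat \<times> nat set) set" where
  "exits n w c = (if fst c < n then (\<lambda>s. cellc w (Suc (fst c)) s) ` snd c else {})"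

definition exit_index :: "nat \<Rightarrow> nat list \<Rightarrow> nat \<times> nat set \<Rightarrow> nat \<times> nat set \<Rightarrow> nat" where
  "exit_index n w c e = Suc (card {e' \<in> exits n w c. Min (snd e') < Min (snd e)})"

definition is_middle_exit :: "nat \<Rightarrow> nat list \<Rightarrow> nat \<times> nat set \<Rightarrow> nat \<times> nat set \<Rightarrow> bool" where
  "is_middle_exit n w c e \<longleftrightarrow> e \<in> exits n w c \<and> 2 \<le> card (exits n w c) \<and>
     2 \<le> exit_index n w c e \<and> exit_index n w c e \<le> card (exits n w c) - 1"

definition is_unique_exit :: "nat \<Rightarrow> nat list \<Rightarrow> nat \<times> nat set \<Rightarrow> nat \<times> nat set \<Rightarrow> bool" where
  "is_unique_exit n w c e \<longleftrightarrow> e \<in> exits n w c \<and> card (exits n w c) = 1"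

definition num_middle :: "nat \<Rightarrow> nat list \<Rightarrow> nat \<times> nat set \<Rightarrow> nat" where
  "num_middle n w c = card {e \<in> exits n w c. is_middle_exit n w c e}"

definition cutpath :: "nat \<Rightarrow> nat list \<Rightarrow> (nat \<times> nat set) list \<Rightarrow> bool" where
  "cutpath n w cs \<longleftrightarrow> length cs = Suc n \<and> cs ! 0 = north_cell w \<and> cs ! n = south_cell n w \<and>
     (\<forall>i<n. cs ! Suc i \<in> exits n w (cs ! i))"

text \<open>(m, k, u): total middle exits of visited cells, middle exits taken, unique exits taken.\<close>
definition path_stats :: "nat \<Rightarrow> nat list \<Rightarrow> (nat \<times> nat set) list \<Rightarrow> nat \<times> nat \<times> nat" where
  "path_stats n w cs =
     (sum_list (map (num_middle n w) cs),
      card {i. i < n \<and> is_middle_exit n w (cs ! i) (cs ! Suc i)},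
      card {i. i < n \<and> is_unique_exit n w (cs ! i) (cs ! Suc i)})"

text \<open>Rotation of the plane by 180 degrees: wiring diagram, and cells.\<close>
definition rot_word :: "nat \<Rightarrow> nat list \<Rightarrow> nat list" where
  "rot_word n w = rev (map (\<lambda>p. n - p) w)"

definition rot_cell :: "nat \<Rightarrow> nat list \<Rightarrow> nat \<times> nat set \<Rightarrow> nat \<times> nat set" where
  "rot_cell n w c = (n - fst c, (\<lambda>s. length w - s) ` snd c)"

definition Gamma :: "nat \<Rightarrow> nat list \<Rightarrow> nat \<Rightarrow> nat \<Rightarrow> nat \<Rightarrow> nat \<Rightarrow> nat \<Rightarrow> nat
    \<Rightarrow> (nat \<times> nat set) list set" where
  "Gamma n w m k u m' k' u' = {cs. cutpath n w cs \<and> path_stats n w cs = (m, k, u) \<and>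
      path_stats n (rot_word n w) (rev (map (rot_cell n w) cs)) = (m', k', u')}"

end

theory Submission
  imports Defs
begin

text \<open>
  Follow a cutpath downwards.  A cell with a single exit forces the step, and such steps are
  counted by \<open>u\<close>.  A cell with \<open>d \<ge> 2\<close> exits has at most two exits that are not middle exits,
  so if it has \<open>a\<close> middle exits, the path can continue in \<open>a\<close> ways that use up one of the
  \<open>k\<close> middle steps and in at most two ways that do not.  By induction on the length \<open>L\<close>, the
  number of downward walks from any cell with statistics \<open>(m, k, u)\<close> is therefore at most
  \<open>B(L,u,m,k) = C(L-u, k) (m/(L-u))^k 2^(L-u-k)\<close> (\<open>walk_bound\<close>).  The induction step
  \<open>a B(L,u,m-a,k-1) + 2 B(L,u,m-a,k) \<le> B(L+1,u,m,k)\<close> comes down to the tangent-line inequality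
  \<open>(j+1) t x^j - j x^(j+1) \<le> t^(j+1)\<close> for the convex function \<open>t^(j+1)\<close>.  The reversed bound is
  the same count in the wiring diagram rotated by 180 degrees, into which rotation maps the cutpaths
  injectively.
\<close>

lemma cell_slots_iff:
  "s' \<in> cell_slots w j s \<longleftrightarrow> s' \<le> length w \<and> j \<notin> (!) w ` {min s s'..<max s s'}"
  unfolding cell_slots_def by auto

lemma cell_slots_subset: "cell_slots w j s \<subseteq> {..length w}"
  unfolding cell_slots_def by auto

lemma cell_slots_self: "s \<le> length w \<Longrightarrow> s \<in> cell_slots w j s"
  unfolding cell_slots_def by simp

lemma cell_slots_eq:
  assumes "s' \<in> cell_slots w j s"
  shows "cell_slots w j s' = cell_slots w j s"
proof -
  have ivl: "{min a c..<max a c} \<subseteq> {min a b..<max a b} \<union> {min b c..<max b c}" for a b c :: nat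
    by (auto simp: min_def max_def)
  have ss': "j \<notin> (!) w ` {min s' s..<max s' s}" "j \<notin> (!) w ` {min s s'..<max s s'}"
    using assms unfolding cell_slots_iff by (simp_all add: min.commute max.commute)
  show ?thesis
  proof (intro set_eqI)
    fix x
    show "x \<in> cell_slots w j s' \<longleftrightarrow> x \<in> cell_slots w j s"
      unfolding cell_slots_iff using ss' ivl[of s' x s] ivl[of s x s'] by blast
  qed
qed

definition is_cell :: "nat list \<Rightarrow> nat \<times> nat set \<Rightarrow> bool" where
  "is_cell w c \<longleftrightarrow> (\<exists>j s. s \<le> length w \<and> c = cellc w j s)"

lemma is_cell_eq_cellc_Min:
  assumes "is_cell w e"
  shows "e = cellc w (fst e) (Min (snd e))"
proof -
  obtain j s where s: "s \<le> length w" "e = cellc w j s"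
    using assms unfolding is_cell_def by blast
  have "finite (cell_slots w j s)"
    by (rule finite_subset[OF cell_slots_subset]) simp
  then have "Min (cell_slots w j s) \<in> cell_slots w j s"
    using cell_slots_self[OF s(1)] by (intro Min_in) auto
  from cell_slots_eq[OF this] show ?thesis
    unfolding s(2) cellc_def by simp
qed

lemma exits_is_cell: "is_cell w c \<Longrightarrow> e \<in> exits n w c \<Longrightarrow> is_cell w e"
  unfolding is_cell_def exits_def cellc_def
  by (auto split: if_splits dest: subsetD[OF cell_slots_subset])

lemma finite_exits: "finite (exits n w c)"
proof -
  have "exits n w c \<subseteq> {Suc (fst c)} \<times> Pow {..length w}"
    unfolding exits_def cellc_def using cell_slots_subset by auto
  then show ?thesis
    by (rule finite_subset) auto
qed

lemma inj_on_Min_exits: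
  assumes "is_cell w c"
  shows "inj_on (\<lambda>e. Min (snd e)) (exits n w c)"
proof (rule inj_onI)
  fix e e' assume e: "e \<in> exits n w c" and e': "e' \<in> exits n w c"
    and Min_eq: "Min (snd e) = Min (snd e')"
  have "fst e = fst e'"
    using e e' unfolding exits_def cellc_def by (auto split: if_splits)
  then show "e = e'"
    using Min_eq is_cell_eq_cellc_Min exits_is_cell[OF assms] e e' by metis
qed

lemma inj_on_rank:
  fixes f :: "'a \<Rightarrow> 'b::linorder"
  assumes "finite A" "inj_on f A"
  shows "inj_on (\<lambda>x. card {y \<in> A. f y < f x}) A"
proof -
  have less: "card {y \<in> A. f y < f x} < card {y \<in> A. f y < f x'}"
    if "x \<in> A" "f x < f x'" for x x'
    using that assms(1) by (intro psubset_card_mono) auto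
  show ?thesis
  proof (rule inj_onI)
    fix x x' assume "x \<in> A" "x' \<in> A" "card {y \<in> A. f y < f x} = card {y \<in> A. f y < f x'}"
    then have "f x = f x'"
      using less[of x x'] less[of x' x] by (cases "f x" "f x'" rule: linorder_cases) auto
    with \<open>x \<in> A\<close> \<open>x' \<in> A\<close> show "x = x'"
      using assms(2) by (auto dest: inj_onD)
  qed
qed

lemma card_non_middle_exits_le:
  assumes "is_cell w c" "2 \<le> card (exits n w c)"
  shows "card {e \<in> exits n w c. \<not> is_middle_exit n w c e} \<le> 2"
proof -
  define E where "E = exits n w c"
  define rank where "rank e = card {e' \<in> E. Min (snd e') < Min (snd e)}" for e :: "nat \<times> nat set"
  have fin: "finite E"
    unfolding E_def by (rule finite_exits)
  have inj: "inj_on rank E"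
    unfolding rank_def E_def using finite_exits inj_on_Min_exits[OF assms(1)] by (rule inj_on_rank)
  have "rank e < card E" if "e \<in> E" for e
    unfolding rank_def using fin that by (intro psubset_card_mono) auto
  then have "rank ` {e \<in> E. \<not> is_middle_exit n w c e} \<subseteq> {0, card E - 1}"
    using assms(2) unfolding is_middle_exit_def exit_index_def rank_def E_def by fastforce
  then have "card {e \<in> E. \<not> is_middle_exit n w c e} \<le> card {0, card E - 1}"
    using inj by (intro card_inj_on_le) (auto intro: inj_on_subset)
  also have "\<dots> \<le> 2"
    by (simp add: card_insert_le_m1)
  finally show ?thesis
    unfolding E_def .
qed

(* The guard matters only for u > L, where the truncated L - u would make the formula positive. *)
definition walk_bound :: "nat \<Rightarrow> nat \<Rightarrow> nat \<Rightarrow> nat \<Rightarrow> real" where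
  "walk_bound L u m k = (if u + k \<le> L
     then real ((L - u) choose k) * (real m / real (L - u)) ^ k * 2 ^ (L - u - k) else 0)"

lemma walk_bound_nonneg: "0 \<le> walk_bound L u m k"
  unfolding walk_bound_def by simp

lemma walk_bound_Suc_Suc: "walk_bound (Suc L) (Suc u) m k = walk_bound L u m k"
  unfolding walk_bound_def by simp

lemma power_ge_tangent:
  fixes t x :: real
  assumes "0 \<le> t" "0 \<le> x"
  shows "real (Suc j) * t * x ^ j - real j * x ^ Suc j \<le> t ^ Suc j"
proof (induction j)
  case 0
  then show ?case by simp
next
  case (Suc j)
  have "t * (real (Suc j) * t * x ^ j - real j * x ^ Suc j)
        - (real (Suc (Suc j)) * t * x ^ Suc j - real (Suc j) * x ^ Suc (Suc j))
        = real (Suc j) * x ^ j * (t - x)\<^sup>2"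
    by (simp add: algebra_simps power2_eq_square)
  moreover have "0 \<le> real (Suc j) * x ^ j * (t - x)\<^sup>2"
    using assms by simp
  moreover have "t * (real (Suc j) * t * x ^ j - real j * x ^ Suc j) \<le> t ^ Suc (Suc j)"
    using Suc assms(1) by (simp add: mult_left_mono)
  ultimately show ?case
    by linarith
qed

lemma choose_power_mean_le:
  fixes x y :: real
  assumes "0 \<le> x" "0 \<le> y"
  shows "real (p choose Suc j) * x ^ Suc j + y * real (p choose j) * x ^ j
         \<le> real (Suc p choose Suc j) * ((real p * x + y) / real (Suc p)) ^ Suc j"
proof -
  define t where "t = (real p * x + y) / real (Suc p)"
  define A where "A = real (p choose j)"
  define B where "B = real (p choose Suc j)"
  define C where "C = real (Suc p choose Suc j)"
  have t: "0 \<le> t" "y = real (Suc p) * t - real p * x"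
    using assms unfolding t_def by (simp_all add: field_simps)
  have pascal: "C = A + B"
    unfolding A_def B_def C_def by simp
  have absorption: "real (Suc p) * A = real (Suc j) * C"
    unfolding A_def C_def by (metis Suc_times_binomial of_nat_mult)
  have "B * x ^ Suc j + y * A * x ^ j = x ^ j * (B * x + real (Suc p) * A * t - real p * A * x)"
    by (simp add: t(2) algebra_simps)
  also have "\<dots> = C * (real (Suc j) * t * x ^ j - real j * x ^ Suc j)"
    using pascal absorption by (simp add: algebra_simps)
  also have "\<dots> \<le> C * t ^ Suc j"
    using power_ge_tangent[OF t(1) assms(1)] unfolding C_def by (intro mult_left_mono) auto
  finally show ?thesis
    unfolding A_def B_def C_def t_def .
qed

lemma double_walk_bound_Suc:
  assumes "u + j \<le> L"
  shows "2 * walk_bound L u M (Suc j)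
           = real ((L - u) choose Suc j) * (real M / real (L - u)) ^ Suc j * 2 ^ (L - u - j)"
proof (cases "Suc j \<le> L - u")
  case True
  then have "(2::real) * 2 ^ (L - u - Suc j) = 2 ^ (L - u - j)"
    by (metis Suc_diff_Suc Suc_le_lessD power_Suc)
  then show ?thesis
    unfolding walk_bound_def using True by (simp add: algebra_simps)
next
  case False
  then show ?thesis
    unfolding walk_bound_def by simp
qed

lemma walk_bound_Suc_ge_Suc:
  assumes "a \<le> m"
  shows "real a * walk_bound L u (m - a) j + 2 * walk_bound L u (m - a) (Suc j)
           \<le> walk_bound (Suc L) u m (Suc j)"
proof (cases "u + j \<le> L")
  case False
  then show ?thesis
    unfolding walk_bound_def by simp
next
  case True
  define p where "p = L - u"
  define x where "x = real (m - a) / real p"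
  have "real a * real (p choose j) * x ^ j + real (p choose Suc j) * x ^ Suc j
      \<le> real (Suc p choose Suc j) * (real m / real (Suc p)) ^ Suc j"
  proof (cases "p = 0")
    case True
    then have "j = 0"
      using \<open>u + j \<le> L\<close> unfolding p_def by simp
    then show ?thesis
      using True assms by simp
  next
    case False
    then have "real p * x + real a = real m"
      unfolding x_def using assms by simp
    then show ?thesis
      using choose_power_mean_le[of x "real a" p j] by (simp add: x_def algebra_simps)
  qed
  then have "(real a * real (p choose j) * x ^ j + real (p choose Suc j) * x ^ Suc j) * 2 ^ (p - j)
      \<le> real (Suc p choose Suc j) * (real m / real (Suc p)) ^ Suc j * 2 ^ (p - j)"
    by (intro mult_right_mono) auto
  moreover have "Suc L - u = Suc p"
    unfolding p_def using True by simp
  ultimately show ?thesis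
    using double_walk_bound_Suc[OF True, of "m - a"] True
    unfolding walk_bound_def p_def x_def by (simp add: algebra_simps)
qed

lemma walk_bound_Suc_ge:
  assumes "a \<le> m"
  shows "real a * (if 1 \<le> k then walk_bound L u (m - a) (k - 1) else 0)
           + 2 * walk_bound L u (m - a) k \<le> walk_bound (Suc L) u m k"
proof (cases k)
  case 0
  then show ?thesis
    unfolding walk_bound_def by (simp add: Suc_diff_le)
next
  case (Suc j)
  then show ?thesis
    using walk_bound_Suc_ge_Suc[OF assms] by simp
qed

definition walks :: "nat \<Rightarrow> nat list \<Rightarrow> nat \<Rightarrow> nat \<times> nat set \<Rightarrow> nat \<Rightarrow> nat \<Rightarrow> nat
    \<Rightarrow> (nat \<times> nat set) list set" where
  "walks n w L c m k u = {cs. length cs = Suc L \<and> cs ! 0 = c \<and>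
      (\<forall>i<L. cs ! Suc i \<in> exits n w (cs ! i)) \<and>
      sum_list (map (num_middle n w) cs) = m \<and>
      card {i. i < L \<and> is_middle_exit n w (cs ! i) (cs ! Suc i)} = k \<and>
      card {i. i < L \<and> is_unique_exit n w (cs ! i) (cs ! Suc i)} = u}"

lemma card_Collect_less_Suc:
  "card {i. i < Suc L \<and> P i} = of_bool (P 0) + card {i. i < L \<and> P (Suc i)}"
proof -
  have "{i. i < Suc L \<and> P i} = (if P 0 then {0} else {}) \<union> Suc ` {i. i < L \<and> P (Suc i)}"
    by (auto simp: less_Suc_eq_0_disj)
  then show ?thesis
    by (simp add: card_image)
qed

lemma walks_0_subset: "walks n w 0 c m k u \<subseteq> (if k = 0 \<and> u = 0 then {[c]} else {})"
proof
  fix cs assume "cs \<in> walks n w 0 c m k u"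
  then show "cs \<in> (if k = 0 \<and> u = 0 then {[c]} else {})"
    unfolding walks_def by (cases cs) auto
qed

lemma walks_Suc_subset:
  fixes n :: nat and w :: "nat list" and c :: "nat \<times> nat set"
  defines "a \<equiv> num_middle n w c"
    and "\<mu> \<equiv> \<lambda>e. of_bool (is_middle_exit n w c e) :: nat"
    and "\<upsilon> \<equiv> \<lambda>e. of_bool (is_unique_exit n w c e) :: nat"
  shows "walks n w (Suc L) c m k u \<subseteq>
    (\<Union>e \<in> {e \<in> exits n w c. a \<le> m \<and> \<mu> e \<le> k \<and> \<upsilon> e \<le> u}.
       Cons c ` walks n w L e (m - a) (k - \<mu> e) (u - \<upsilon> e))"
proof
  fix cs assume cs: "cs \<in> walks n w (Suc L) c m k u"
  then obtain cs' where cs': "cs = c # cs'"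
    unfolding walks_def by (cases cs) auto
  define e where "e = cs' ! 0"
  have "e \<in> exits n w c"
    using cs unfolding walks_def cs' e_def by auto
  moreover have "cs' \<in> walks n w L e (m - a) (k - \<mu> e) (u - \<upsilon> e)"
    and "a \<le> m" "\<mu> e \<le> k" "\<upsilon> e \<le> u"
    using cs card_Collect_less_Suc[of L "\<lambda>i. is_middle_exit n w (cs ! i) (cs ! Suc i)"]
      card_Collect_less_Suc[of L "\<lambda>i. is_unique_exit n w (cs ! i) (cs ! Suc i)"]
    unfolding walks_def cs' e_def a_def \<mu>_def \<upsilon>_def by auto
  ultimately show "cs \<in> (\<Union>e \<in> {e \<in> exits n w c. a \<le> m \<and> \<mu> e \<le> k \<and> \<upsilon> e \<le> u}.
       Cons c ` walks n w L e (m - a) (k - \<mu> e) (u - \<upsilon> e))"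
    unfolding cs' by blast
qed

lemma finite_walks: "finite (walks n w L c m k u)"
proof (induction L arbitrary: c m k u)
  case 0
  show ?case
    using walks_0_subset by (rule finite_subset) simp
next
  case (Suc L)
  show ?case
    using walks_Suc_subset by (rule finite_subset) (simp add: finite_exits Suc.IH)
qed

lemma sum_middle_exits_le:
  assumes "is_cell w c" "2 \<le> card (exits n w c)" "0 \<le> X0"
  shows "(\<Sum>e\<in>exits n w c. if is_middle_exit n w c e then X1 else X0)
           \<le> real (num_middle n w c) * X1 + 2 * X0"
proof -
  have "(\<Sum>e\<in>exits n w c. if is_middle_exit n w c e then X1 else X0)
      = real (num_middle n w c) * X1 + real (card {e \<in> exits n w c. \<not> is_middle_exit n w c e}) * X0"
    using finite_exits unfolding num_middle_def by (simp add: sum.If_cases Int_def conj_commute)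
  also have "\<dots> \<le> real (num_middle n w c) * X1 + 2 * X0"
    using card_non_middle_exits_le[OF assms(1,2)] assms(3)
    by (intro add_left_mono mult_right_mono) auto
  finally show ?thesis .
qed

lemma sum_exit_bounds_le:
  fixes n :: nat and w :: "nat list" and c :: "nat \<times> nat set"
  assumes "is_cell w c"
  defines "a \<equiv> num_middle n w c"
    and "\<mu> \<equiv> \<lambda>e. of_bool (is_middle_exit n w c e) :: nat"
    and "\<upsilon> \<equiv> \<lambda>e. of_bool (is_unique_exit n w c e) :: nat"
  shows "(\<Sum>e \<in> {e \<in> exits n w c. a \<le> m \<and> \<mu> e \<le> k \<and> \<upsilon> e \<le> u}.
            walk_bound L (u - \<upsilon> e) (m - a) (k - \<mu> e)) \<le> walk_bound (Suc L) u m k"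
    (is "?S \<le> _")
proof (cases "a \<le> m")
  case False
  then show ?thesis
    by (simp add: walk_bound_nonneg)
next
  case a_le: True
  define E where "E = exits n w c"
  have fin: "finite E"
    unfolding E_def by (rule finite_exits)
  consider "card E = 0" | "card E = 1" | "2 \<le> card E"
    by linarith
  then show ?thesis
  proof cases
    case 1
    then show ?thesis
      using fin unfolding E_def by (simp add: walk_bound_nonneg)
  next
    case 2
    then obtain e0 where E: "E = {e0}"
      by (rule card_1_singletonE)
    then have "\<upsilon> e0 = 1" "\<mu> e = 0" "a = 0" for e
      using 2 unfolding \<upsilon>_def \<mu>_def a_def num_middle_def is_unique_exit_def is_middle_exit_def E_def
      by auto
    then have "{e \<in> exits n w c. a \<le> m \<and> \<mu> e \<le> k \<and> \<upsilon> e \<le> u} = (if 1 \<le> u then {e0} else {})"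
      using E unfolding E_def by auto
    then have "?S = (if 1 \<le> u then walk_bound L (u - 1) m k else 0)"
      using \<open>\<upsilon> e0 = 1\<close> \<open>\<mu> e0 = 0\<close> \<open>a = 0\<close> by simp
    then show ?thesis
      by (cases u) (simp_all add: walk_bound_nonneg walk_bound_Suc_Suc)
  next
    case 3
    define X1 where "X1 = (if 1 \<le> k then walk_bound L u (m - a) (k - 1) else 0)"
    define X0 where "X0 = walk_bound L u (m - a) k"
    have "\<upsilon> e = 0" for e
      using 3 unfolding \<upsilon>_def is_unique_exit_def E_def by simp
    then have "?S = (\<Sum>e\<in>E. if is_middle_exit n w c e then X1 else X0)"
      using fin a_le unfolding E_def X0_def X1_def \<mu>_def
      by (subst sum.inter_filter) (auto intro!: sum.cong)
    also have "\<dots> \<le> real a * X1 + 2 * X0"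
      unfolding E_def a_def X0_def
      by (rule sum_middle_exits_le[OF assms(1) 3[unfolded E_def] walk_bound_nonneg])
    also have "\<dots> \<le> walk_bound (Suc L) u m k"
      unfolding X0_def X1_def using walk_bound_Suc_ge[OF a_le] .
    finally show ?thesis .
  qed
qed

lemma card_walks_le:
  assumes "is_cell w c"
  shows "real (card (walks n w L c m k u)) \<le> walk_bound L u m k"
  using assms
proof (induction L arbitrary: c m k u)
  case 0
  have "card (walks n w 0 c m k u) \<le> card (if k = 0 \<and> u = 0 then {[c]} else {})"
    by (rule card_mono[OF _ walks_0_subset]) simp
  then show ?case
    unfolding walk_bound_def by (auto split: if_splits)
next
  case (Suc L)
  define a where "a = num_middle n w c"
  define \<mu> where "\<mu> e = (of_bool (is_middle_exit n w c e) :: nat)" for e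
  define \<upsilon> where "\<upsilon> e = (of_bool (is_unique_exit n w c e) :: nat)" for e
  define E where "E = {e \<in> exits n w c. a \<le> m \<and> \<mu> e \<le> k \<and> \<upsilon> e \<le> u}"
  have fin: "finite E"
    unfolding E_def using finite_exits by simp
  have "walks n w (Suc L) c m k u \<subseteq> (\<Union>e\<in>E. Cons c ` walks n w L e (m - a) (k - \<mu> e) (u - \<upsilon> e))"
    (is "_ \<subseteq> ?U")
    unfolding E_def a_def \<mu>_def \<upsilon>_def by (rule walks_Suc_subset)
  then have "card (walks n w (Suc L) c m k u) \<le> card ?U"
    using fin by (intro card_mono) (auto simp: finite_walks)
  also have "\<dots> \<le> (\<Sum>e\<in>E. card (walks n w L e (m - a) (k - \<mu> e) (u - \<upsilon> e)))"
    by (rule order_trans[OF card_UN_le[OF fin] sum_mono]) (rule card_image_le[OF finite_walks])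
  finally have "real (card (walks n w (Suc L) c m k u))
      \<le> (\<Sum>e\<in>E. real (card (walks n w L e (m - a) (k - \<mu> e) (u - \<upsilon> e))))"
    by (simp flip: of_nat_sum)
  also have "\<dots> \<le> (\<Sum>e\<in>E. walk_bound L (u - \<upsilon> e) (m - a) (k - \<mu> e))"
    using Suc.IH exits_is_cell[OF Suc.prems] unfolding E_def by (intro sum_mono) auto
  also have "\<dots> \<le> walk_bound (Suc L) u m k"
    using sum_exit_bounds_le[OF Suc.prems] unfolding E_def a_def \<mu>_def \<upsilon>_def .
  finally show ?case .
qed

definition cutpaths :: "nat \<Rightarrow> nat list \<Rightarrow> nat \<Rightarrow> nat \<Rightarrow> nat \<Rightarrow> (nat \<times> nat set) list set" where
  "cutpaths n w m k u = {cs. cutpath n w cs \<and> path_stats n w cs = (m, k, u)}"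

lemma cutpaths_subset_walks: "cutpaths n w m k u \<subseteq> walks n w n (north_cell w) m k u"
  unfolding cutpaths_def walks_def cutpath_def path_stats_def by auto

lemma finite_cutpaths: "finite (cutpaths n w m k u)"
  using cutpaths_subset_walks finite_walks by (rule finite_subset)

lemma card_cutpaths_le:
  "real (card (cutpaths n w m k u))
     \<le> real ((n - u) choose k) * (real m / real (n - u)) ^ k * 2 ^ (n - k - u)"
proof -
  have "card (cutpaths n w m k u) \<le> card (walks n w n (north_cell w) m k u)"
    using finite_walks cutpaths_subset_walks by (rule card_mono)
  then have "real (card (cutpaths n w m k u)) \<le> real (card (walks n w n (north_cell w) m k u))"
    by simp
  also have "\<dots> \<le> walk_bound n u m k"
    by (rule card_walks_le) (auto simp: is_cell_def north_cell_def)
  also have "\<dots> \<le> real ((n - u) choose k) * (real m / real (n - u)) ^ k * 2 ^ (n - k - u)"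
    unfolding walk_bound_def by (auto simp: add.commute)
  finally show ?thesis .
qed

lemma length_rot_word [simp]: "length (rot_word n w) = length w"
  unfolding rot_word_def by simp

lemma nth_rot_word: "t < length w \<Longrightarrow> rot_word n w ! t = n - w ! (length w - Suc t)"
  unfolding rot_word_def by (simp add: rev_nth)

lemma set_rot_word: "set w \<subseteq> {1..<n} \<Longrightarrow> set (rot_word n w) \<subseteq> {1..<n}"
  unfolding rot_word_def by (auto dest!: subsetD)

lemma ivl_reflect:
  fixes x y l :: nat
  assumes "x \<le> l" "y \<le> l"
  shows "{min (l - x) (l - y)..<max (l - x) (l - y)} = (\<lambda>t. l - Suc t) ` {min x y..<max x y}"
proof -
  have "{l - b..<l - a} = (\<lambda>t. l - Suc t) ` {a..<b}" if "a \<le> b" "b \<le> l" for a b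
  proof (intro set_eqI iffI)
    fix t assume "t \<in> {l - b..<l - a}"
    then show "t \<in> (\<lambda>t. l - Suc t) ` {a..<b}"
      using that by (intro image_eqI[of _ _ "l - Suc t"]) auto
  qed (use that in auto)
  then show ?thesis
    using assms by (cases "x \<le> y") (simp_all add: min_def max_def)
qed

lemma nth_rot_word_image_ivl:
  assumes "x \<le> length w" "y \<le> length w"
  shows "(!) (rot_word n w) `
             {min (length w - x) (length w - y)..<max (length w - x) (length w - y)}
           = (\<lambda>p. n - p) ` (!) w ` {min x y..<max x y}"
proof -
  have "rot_word n w ! (length w - Suc t) = n - w ! t" if "t \<in> {min x y..<max x y}" for t
    using that assms by (subst nth_rot_word) (auto simp: max_def split: if_splits)
  then show ?thesis
    unfolding ivl_reflect[OF assms] image_image by (rule image_cong[OF refl])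
qed

lemma rot_cell_slots:
  assumes w: "\<forall>p\<in>set w. p \<le> n" and j: "j \<le> n" and s: "s \<le> length w"
  shows "cell_slots (rot_word n w) (n - j) (length w - s) = (\<lambda>s. length w - s) ` cell_slots w j s"
proof -
  have crossing_iff: "n - j \<in> (\<lambda>p. n - p) ` (!) w ` {min s y..<max s y}
      \<longleftrightarrow> j \<in> (!) w ` {min s y..<max s y}" if "y \<le> length w" for y
  proof -
    have "{min s y..<max s y} \<subseteq> {..<length w}"
      using s that by (simp add: subset_iff max_def)
    then have "(!) w ` {min s y..<max s y} \<subseteq> {..n}"
      using w by (auto dest!: subsetD)
    moreover have "inj_on (\<lambda>p. n - p) {..n}"
      by (auto intro: inj_onI)
    ultimately show ?thesis
      using j by (intro inj_on_image_mem_iff) auto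
  qed
  show ?thesis
  proof (intro set_eqI iffI)
    fix x assume "x \<in> cell_slots (rot_word n w) (n - j) (length w - s)"
    then have x: "x \<le> length w"
      and free: "n - j \<notin> (!) (rot_word n w) ` {min (length w - s) x..<max (length w - s) x}"
      unfolding cell_slots_iff by auto
    define y where "y = length w - x"
    have y: "y \<le> length w" "x = length w - y"
      unfolding y_def using x by auto
    have "n - j \<notin> (\<lambda>p. n - p) ` (!) w ` {min s y..<max s y}"
      using free unfolding y(2) nth_rot_word_image_ivl[OF s y(1)] .
    then have "y \<in> cell_slots w j s"
      unfolding cell_slots_iff crossing_iff[OF y(1)] using y(1) by blast
    then show "x \<in> (\<lambda>s. length w - s) ` cell_slots w j s"
      using y(2) by blast
  next
    fix x assume "x \<in> (\<lambda>s. length w - s) ` cell_slots w j s"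
    then obtain y where "y \<in> cell_slots w j s" "x = length w - y"
      by blast
    then have y: "y \<le> length w" "j \<notin> (!) w ` {min s y..<max s y}" "x = length w - y"
      unfolding cell_slots_iff by simp_all
    then have "n - j \<notin> (!) (rot_word n w) ` {min (length w - s) x..<max (length w - s) x}"
      unfolding y(3) nth_rot_word_image_ivl[OF s y(1)] crossing_iff[OF y(1)] by blast
    then show "x \<in> cell_slots (rot_word n w) (n - j) (length w - s)"
      unfolding cell_slots_iff y(3) by simp
  qed
qed

lemma rot_cellc:
  assumes "\<forall>p\<in>set w. p \<le> n" "j \<le> n" "s \<le> length w"
  shows "rot_cell n w (cellc w j s) = cellc (rot_word n w) (n - j) (length w - s)"
  unfolding rot_cell_def cellc_def using rot_cell_slots[OF assms] by simp

lemma rot_exit: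
  assumes w: "\<forall>p\<in>set w. p \<le> n" and j: "j < n" and s: "s \<le> length w"
    and s': "s' \<in> cell_slots w j s"
  shows "rot_cell n w (cellc w j s) \<in> exits n (rot_word n w) (rot_cell n w (cellc w (Suc j) s'))"
proof -
  define w' where "w' = rot_word n w"
  define l where "l = length w"
  have s'_le: "s' \<le> l"
    using s' cell_slots_subset unfolding l_def by blast
  have "l - s' \<in> cell_slots w' (n - j) (l - s)"
    using rot_cell_slots[OF w _ s] s' j unfolding w'_def l_def by auto
  then have "cellc w' (n - j) (l - s) = cellc w' (Suc (n - Suc j)) (l - s')"
    using cell_slots_eq j unfolding cellc_def by (simp add: Suc_diff_Suc)
  moreover have "l - s' \<in> cell_slots w' (n - Suc j) (l - s')"
    by (rule cell_slots_self) (simp add: w'_def l_def)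
  ultimately have "cellc w' (n - j) (l - s) \<in> exits n w' (cellc w' (n - Suc j) (l - s'))"
    unfolding exits_def by (auto simp: cellc_def)
  then show ?thesis
    using rot_cellc[OF w _ s] rot_cellc[OF w _ s'_le[unfolded l_def]] j
    unfolding w'_def l_def by simp
qed

lemma cutpath_cells:
  assumes "cutpath n w cs" "i \<le> n"
  shows "\<exists>s. s \<le> length w \<and> cs ! i = cellc w i s"
  using assms(2)
proof (induction i)
  case 0
  then show ?case
    using assms(1) unfolding cutpath_def north_cell_def by auto
next
  case (Suc i)
  then obtain s where s: "s \<le> length w" "cs ! i = cellc w i s"
    by auto
  have "cs ! Suc i \<in> exits n w (cs ! i)"
    using assms(1) Suc.prems unfolding cutpath_def by auto
  then obtain s' where "s' \<in> cell_slots w i s" "cs ! Suc i = cellc w (Suc i) s'"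
    unfolding s(2) exits_def by (auto simp: cellc_def split: if_splits)
  then show ?case
    using cell_slots_subset by blast
qed

lemma cell_slots_free_level:
  assumes "j \<notin> set w" "s \<le> length w"
  shows "cell_slots w j s = {..length w}"
proof -
  have "w ! t \<noteq> j" if "t < max s s'" "s' \<le> length w" for t s'
    using that assms nth_mem by (metis max.bounded_iff order_less_le_trans)
  then show ?thesis
    using cell_slots_subset unfolding cell_slots_def by auto
qed

lemma rot_south_cell:
  assumes "set w \<subseteq> {1..<n}"
  shows "rot_cell n w (south_cell n w) = north_cell (rot_word n w)"
proof -
  have w_le: "\<forall>p\<in>set w. p \<le> n" and free: "0 \<notin> set (rot_word n w)"
    using assms set_rot_word[OF assms] by auto
  have "rot_cell n w (south_cell n w) = cellc (rot_word n w) 0 (length w)"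
    unfolding south_cell_def using rot_cellc[OF w_le, of n 0] by simp
  also have "\<dots> = north_cell (rot_word n w)"
    unfolding north_cell_def cellc_def using cell_slots_free_level[OF free] by simp
  finally show ?thesis .
qed

lemma rot_north_cell:
  assumes "set w \<subseteq> {1..<n}"
  shows "rot_cell n w (north_cell w) = south_cell n (rot_word n w)"
proof -
  have w_le: "\<forall>p\<in>set w. p \<le> n" and free: "n \<notin> set (rot_word n w)"
    using assms set_rot_word[OF assms] by auto
  have "rot_cell n w (north_cell w) = cellc (rot_word n w) n (length w)"
    unfolding north_cell_def using rot_cellc[OF w_le, of 0 0] by simp
  also have "\<dots> = south_cell n (rot_word n w)"
    unfolding south_cell_def cellc_def using cell_slots_free_level[OF free] by simp
  finally show ?thesis .
qed

lemma cutpath_rot: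
  assumes w: "set w \<subseteq> {1..<n}" and cs: "cutpath n w cs"
  shows "cutpath n (rot_word n w) (rev (map (rot_cell n w) cs))"
proof -
  have w_le: "\<forall>p\<in>set w. p \<le> n"
    using w by auto
  have len: "length cs = Suc n"
    using cs unfolding cutpath_def by simp
  have nth: "rev (map (rot_cell n w) cs) ! i = rot_cell n w (cs ! (n - i))" if "i \<le> n" for i
    using that len by (simp add: rev_nth)
  have step: "rot_cell n w (cs ! q) \<in> exits n (rot_word n w) (rot_cell n w (cs ! Suc q))"
    if q: "q < n" for q
  proof -
    obtain s where s: "s \<le> length w" "cs ! q = cellc w q s"
      using cutpath_cells[OF cs, of q] q by auto
    have "cs ! Suc q \<in> exits n w (cs ! q)"
      using cs q unfolding cutpath_def by auto
    then obtain s' where "s' \<in> cell_slots w q s" "cs ! Suc q = cellc w (Suc q) s'"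
      unfolding s(2) exits_def using q by (auto simp: cellc_def)
    then show ?thesis
      using rot_exit[OF w_le q s(1)] s(2) by simp
  qed
  show ?thesis
    unfolding cutpath_def
  proof (intro conjI allI impI)
    fix i assume "i < n"
    then show "rev (map (rot_cell n w) cs) ! Suc i
        \<in> exits n (rot_word n w) (rev (map (rot_cell n w) cs) ! i)"
      using step[of "n - Suc i"] nth[of i] nth[of "Suc i"] by (simp add: Suc_diff_Suc)
  qed (use cs len nth rot_south_cell[OF w] rot_north_cell[OF w] in \<open>simp_all add: cutpath_def\<close>)
qed

lemma inj_on_rot_cutpaths: "inj_on (\<lambda>cs. rev (map (rot_cell n w) cs)) {cs. cutpath n w cs}"
proof -
  define C where "C = {c. fst c \<le> n \<and> snd c \<subseteq> {..length w}}"
  have "inj_on (\<lambda>s. length w - s) {..length w}"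
    by (auto intro: inj_onI)
  then have "inj_on (rot_cell n w) C"
    unfolding C_def rot_cell_def by (auto intro!: inj_onI simp: inj_on_image_eq_iff prod_eq_iff)
  moreover have "set cs \<subseteq> C" if "cutpath n w cs" for cs
  proof
    fix c assume "c \<in> set cs"
    moreover have "length cs = Suc n"
      using that unfolding cutpath_def by simp
    ultimately obtain i where "i \<le> n" "c = cs ! i"
      by (auto simp: in_set_conv_nth less_Suc_eq_le)
    then show "c \<in> C"
      using cutpath_cells[OF that] cell_slots_subset unfolding C_def cellc_def by fastforce
  qed
  ultimately have "inj_on (map (rot_cell n w)) {cs. cutpath n w cs}"
    by (intro inj_on_mapI) (auto intro: inj_on_subset)
  then show ?thesis
    by (auto intro!: inj_onI dest: inj_onD)
qed

theorem mainTheorem3: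
  fixes n :: nat and w :: "nat list" and m k u m' k' u' :: nat
  assumes "wiring_diagram n w"
  shows "(k \<le> m \<and> k \<le> n - u \<longrightarrow>
            real (card (Gamma n w m k u m' k' u'))
              \<le> real ((n - u) choose k) * (real m / real (n - u)) ^ k * 2 ^ (n - k - u))
       \<and> (k' \<le> m' \<and> k' \<le> n - u' \<longrightarrow>
            real (card (Gamma n w m k u m' k' u'))
              \<le> real ((n - u') choose k') * (real m' / real (n - u')) ^ k' * 2 ^ (n - k' - u'))"
proof -
  let ?G = "Gamma n w m k u m' k' u'"
  let ?rot = "\<lambda>cs. rev (map (rot_cell n w) cs)"
  have w: "set w \<subseteq> {1..<n}"
    using assms unfolding wiring_diagram_def by simp
  have "card ?G \<le> card (cutpaths n w m k u)"
    using finite_cutpaths by (rule card_mono) (auto simp: Gamma_def cutpaths_def)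
  moreover have "card ?G \<le> card (cutpaths n (rot_word n w) m' k' u')"
  proof (rule card_inj_on_le)
    show "inj_on ?rot ?G"
      using inj_on_rot_cutpaths by (rule inj_on_subset) (auto simp: Gamma_def)
    show "?rot ` ?G \<subseteq> cutpaths n (rot_word n w) m' k' u'"
      using cutpath_rot[OF w] by (auto simp: Gamma_def cutpaths_def)
  qed (rule finite_cutpaths)
  ultimately show ?thesis
    using card_cutpaths_le[of n w m k u] card_cutpaths_le[of n "rot_word n w" m' k' u']
    by (meson of_nat_le_iff order_trans)
qed

end
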